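(* Let $\Theta$ be a variety and $H\in\Theta$. If $H$ is LG-saturated, then $H$ is MT-saturated.
   Context: Setting: variety $\Theta$, infinite variable set $X^0$, $\Gamma^0$ its finite subsets, $W(X)$ free $\Theta$-algebras, points $\mu:W(X)\to H$. $\Phi(X)$ ($X\in\Gamma^0$) is the $X$-sort of the multi-sorted algebra of formulas over $\Theta$ (free multi-sorted Halmos algebra generated by equalities $w\equiv w'$, $w,w'\in W(X)$), with valuation $Val^X_H$ into subsets of $\mathrm{Hom}(W(X),H)$; $LKer(\mu)=\{u\in\Phi(X):\mu\in Val^X_H(u)\}$, and $Th^X(H)=\{u:Val^X_H(u)=\mathrm{Hom}(W(X),H)\}$. $H$ is LG-saturated if for every $X\in\Gamma^0$ every Boolean ultrafilter of $\Phi(X)$ containing $Th^X(H)$ equals $LKer(\mu)$ for some $\mu:W(X)\to H$. $\Phi(X^0)$ is the one-sorted algebra of first-order formulas (modulo logical equivalence) over variables $X^0$ built from equalities in $W(X^0)$. For $X=\{x_1,\dots,x_n\}$, a formula of $\Phi(X^0)$ is $X$-special if its free variables lie in $X$ and its bound variables lie in $X^0\setminus X$. An $X$-type (MT-type) of $H$ is a set of $X$-special formulas consistent with the elementary theory of $H$. For $\mu$ with $a_i=\mu(x_i)$, $Tp^H(\mu)$ is the set of $X$-special $u(x_1,\dots,x_n;y_1,\dots,y_m)$ with $u(a_1,\dots,a_n;y_1,\dots,y_m)$ true in $H$. $H$ is MT-saturated if for every $X\in\Gamma^0$ and every $X$-type $T$ of $H$ there is a point $\mu:W(X)\to H$ with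 $T\subset Tp^H(\mu)$. *)

theory Defs
  imports Main
begin

text \<open>Operation symbols have type 'f with arity function ar. Variables are natural
  numbers: the infinite variable set X0 is UNIV :: nat set.\<close>

datatype 'f trm = Var nat | App 'f "'f trm list"

fun wf_trm :: "('f \<Rightarrow> nat) \<Rightarrow> 'f trm \<Rightarrow> bool" where
  "wf_trm ar (Var n) = True"
| "wf_trm ar (App f ts) = (length ts = ar f \<and> (\<forall>t\<in>set ts. wf_trm ar t))"

fun tvars :: "'f trm \<Rightarrow> nat set" where
  "tvars (Var n) = {n}"
| "tvars (App f ts) = (\<Union>t\<in>set ts. tvars t)"

fun eval :: "('f \<Rightarrow> 'a list \<Rightarrow> 'a) \<Rightarrow> (nat \<Rightarrow> 'a) \<Rightarrow> 'f trm \<Rightarrow> 'a" where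
  "eval I s (Var n) = s n"
| "eval I s (App f ts) = I f (map (eval I s) ts)"

definition is_alg :: "('f \<Rightarrow> nat) \<Rightarrow> 'a set \<Rightarrow> ('f \<Rightarrow> 'a list \<Rightarrow> 'a) \<Rightarrow> bool" where
  "is_alg ar A I \<longleftrightarrow> A \<noteq> {} \<and>
     (\<forall>f xs. length xs = ar f \<longrightarrow> set xs \<subseteq> A \<longrightarrow> I f xs \<in> A)"

text \<open>A variety Theta is given by a set E of identities (pairs of well-formed terms).\<close>
definition variety :: "('f \<Rightarrow> nat) \<Rightarrow> ('f trm \<times> 'f trm) set \<Rightarrow> bool" where
  "variety ar E \<longleftrightarrow> (\<forall>(l, r)\<in>E. wf_trm ar l \<and> wf_trm ar r)"

definition in_variety ::
  "('f \<Rightarrow> nat) \<Rightarrow> ('f trm \<times> 'f trm) set \<Rightarrow> 'a set \<Rightarrow> ('f \<Rightarrow> 'a list \<Rightarrow> 'a) \<Rightarrow> bool" where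
  "in_variety ar E A I \<longleftrightarrow> is_alg ar A I \<and>
     (\<forall>(l, r)\<in>E. \<forall>s. range s \<subseteq> A \<longrightarrow> eval I s l = eval I s r)"

datatype 'f fm = Eq "'f trm" "'f trm" | Neg "'f fm" | Conj "'f fm" "'f fm" | Ex nat "'f fm"

fun wf_fm :: "('f \<Rightarrow> nat) \<Rightarrow> 'f fm \<Rightarrow> bool" where
  "wf_fm ar (Eq t1 t2) = (wf_trm ar t1 \<and> wf_trm ar t2)"
| "wf_fm ar (Neg u) = wf_fm ar u"
| "wf_fm ar (Conj u v) = (wf_fm ar u \<and> wf_fm ar v)"
| "wf_fm ar (Ex x u) = wf_fm ar u"

fun fv :: "'f fm \<Rightarrow> nat set" where
  "fv (Eq t1 t2) = tvars t1 \<union> tvars t2"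
| "fv (Neg u) = fv u"
| "fv (Conj u v) = fv u \<union> fv v"
| "fv (Ex x u) = fv u - {x}"

fun bv :: "'f fm \<Rightarrow> nat set" where
  "bv (Eq t1 t2) = {}"
| "bv (Neg u) = bv u"
| "bv (Conj u v) = bv u \<union> bv v"
| "bv (Ex x u) = insert x (bv u)"

fun sat :: "'a set \<Rightarrow> ('f \<Rightarrow> 'a list \<Rightarrow> 'a) \<Rightarrow> (nat \<Rightarrow> 'a) \<Rightarrow> 'f fm \<Rightarrow> bool" where
  "sat A I s (Eq t1 t2) = (eval I s t1 = eval I s t2)"
| "sat A I s (Neg u) = (\<not> sat A I s u)"
| "sat A I s (Conj u v) = (sat A I s u \<and> sat A I s v)"
| "sat A I s (Ex x u) = (\<exists>a\<in>A. sat A I (s(x := a)) u)"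

text \<open>Elements of Phi(X), X finite: (well-formed) formulas whose free variables lie in X,
  considered up to equivalence in Theta.  Points mu : W(X) \<rightarrow> H are represented
  by their values on the free generators X, i.e. by assignments s with s ` X \<subseteq> A.\<close>

definition PhiX :: "('f \<Rightarrow> nat) \<Rightarrow> nat set \<Rightarrow> 'f fm set" where
  "PhiX ar X = {u. wf_fm ar u \<and> fv u \<subseteq> X}"

definition is_point :: "'a set \<Rightarrow> nat set \<Rightarrow> (nat \<Rightarrow> 'a) \<Rightarrow> bool" where
  "is_point A X s \<longleftrightarrow> s ` X \<subseteq> A"

text \<open>Boolean order of Phi(X): u \<le> v iff u \<longrightarrow> v holds under every point of
  every algebra of Theta (algebras with carrier in the ambient type 'a).\<close>
definition phi_le ::
  "('f \<Rightarrow> nat) \<Rightarrow> ('f trm \<times> 'f trm) set \<Rightarrow> 'a itself \<Rightarrow> nat set \<Rightarrow> 'f fm \<Rightarrow> 'f fm \<Rightarrow> bool" where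
  "phi_le ar E (_::'a itself) X u v \<longleftrightarrow>
     (\<forall>(B::'a set) J s. in_variety ar E B J \<longrightarrow> is_point B X s \<longrightarrow> sat B J s u \<longrightarrow> sat B J s v)"

definition ultrafilter_Phi ::
  "('f \<Rightarrow> nat) \<Rightarrow> ('f trm \<times> 'f trm) set \<Rightarrow> 'a itself \<Rightarrow> nat set \<Rightarrow> 'f fm set \<Rightarrow> bool" where
  "ultrafilter_Phi ar E T X U \<longleftrightarrow>
     U \<subseteq> PhiX ar X \<and>
     U \<noteq> PhiX ar X \<and>
     (\<forall>u\<in>U. \<forall>v\<in>PhiX ar X. phi_le ar E T X u v \<longrightarrow> v \<in> U) \<and>
     (\<forall>u\<in>U. \<forall>v\<in>U. Conj u v \<in> U) \<and>
     (\<forall>u\<in>PhiX ar X. u \<in> U \<or> Neg u \<in> U)"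

definition LKer ::
  "('f \<Rightarrow> nat) \<Rightarrow> 'a set \<Rightarrow> ('f \<Rightarrow> 'a list \<Rightarrow> 'a) \<Rightarrow> nat set \<Rightarrow> (nat \<Rightarrow> 'a) \<Rightarrow> 'f fm set" where
  "LKer ar A I X s = {u \<in> PhiX ar X. sat A I s u}"

definition ThX ::
  "('f \<Rightarrow> nat) \<Rightarrow> 'a set \<Rightarrow> ('f \<Rightarrow> 'a list \<Rightarrow> 'a) \<Rightarrow> nat set \<Rightarrow> 'f fm set" where
  "ThX ar A I X = {u \<in> PhiX ar X. \<forall>s. is_point A X s \<longrightarrow> sat A I s u}"

definition LG_saturated ::
  "('f \<Rightarrow> nat) \<Rightarrow> ('f trm \<times> 'f trm) set \<Rightarrow> 'a set \<Rightarrow> ('f \<Rightarrow> 'a list \<Rightarrow> 'a) \<Rightarrow> bool" where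
  "LG_saturated ar E A I \<longleftrightarrow>
     (\<forall>X. finite X \<longrightarrow>
        (\<forall>U. ultrafilter_Phi ar E TYPE('a) X U \<and> ThX ar A I X \<subseteq> U \<longrightarrow>
           (\<exists>s. is_point A X s \<and> U = LKer ar A I X s)))"

definition X_special :: "('f \<Rightarrow> nat) \<Rightarrow> nat set \<Rightarrow> 'f fm \<Rightarrow> bool" where
  "X_special ar X u \<longleftrightarrow> wf_fm ar u \<and> fv u \<subseteq> X \<and> bv u \<inter> X = {}"

text \<open>A set T of X-special formulas is consistent with the elementary theory of H
  iff it is finitely satisfiable in H (compactness).\<close>
definition MT_type ::
  "('f \<Rightarrow> nat) \<Rightarrow> 'a set \<Rightarrow> ('f \<Rightarrow> 'a list \<Rightarrow> 'a) \<Rightarrow> nat set \<Rightarrow> 'f fm set \<Rightarrow> bool" where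
  "MT_type ar A I X T \<longleftrightarrow>
     (\<forall>u\<in>T. X_special ar X u) \<and>
     (\<forall>T0. T0 \<subseteq> T \<longrightarrow> finite T0 \<longrightarrow> (\<exists>s. is_point A X s \<and> (\<forall>u\<in>T0. sat A I s u)))"

definition Tp ::
  "('f \<Rightarrow> nat) \<Rightarrow> 'a set \<Rightarrow> ('f \<Rightarrow> 'a list \<Rightarrow> 'a) \<Rightarrow> nat set \<Rightarrow> (nat \<Rightarrow> 'a) \<Rightarrow> 'f fm set" where
  "Tp ar A I X s = {u. X_special ar X u \<and> sat A I s u}"

definition MT_saturated ::
  "('f \<Rightarrow> nat) \<Rightarrow> 'a set \<Rightarrow> ('f \<Rightarrow> 'a list \<Rightarrow> 'a) \<Rightarrow> bool" where
  "MT_saturated ar A I \<longleftrightarrow>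
     (\<forall>X. finite X \<longrightarrow>
        (\<forall>T. MT_type ar A I X T \<longrightarrow> (\<exists>s. is_point A X s \<and> T \<subseteq> Tp ar A I X s)))"

end

theory Submission
  imports Defs
begin

text \<open>An X-type T is finitely satisfiable in H, and so is T together with Th^X(H).  By Zorn's
  lemma this extends to a maximal finitely satisfiable subset M of Phi(X).  Maximality makes M
  deductively closed, closed under conjunction and complete, i.e. a Boolean ultrafilter of
  Phi(X) containing Th^X(H).  LG-saturation realizes M as LKer(mu) for a point mu, and then
  every formula of T holds at mu.\<close>

definition finitely_satisfiable ::
  "'a set \<Rightarrow> ('f \<Rightarrow> 'a list \<Rightarrow> 'a) \<Rightarrow> nat set \<Rightarrow> 'f fm set \<Rightarrow> bool" where
  "finitely_satisfiable A I X S \<longleftrightarrow>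
     (\<forall>S0. S0 \<subseteq> S \<longrightarrow> finite S0 \<longrightarrow> (\<exists>s. is_point A X s \<and> (\<forall>u\<in>S0. sat A I s u)))"

lemma MT_type_iff:
  "MT_type ar A I X T \<longleftrightarrow> (\<forall>u\<in>T. X_special ar X u) \<and> finitely_satisfiable A I X T"
  by (simp add: MT_type_def finitely_satisfiable_def)

lemma finitely_satisfiable_Un_ThX:
  assumes "finitely_satisfiable A I X T"
  shows "finitely_satisfiable A I X (T \<union> ThX ar A I X)"
  unfolding finitely_satisfiable_def
proof (intro allI impI)
  fix S0 assume S0: "S0 \<subseteq> T \<union> ThX ar A I X" "finite S0"
  then obtain s where "is_point A X s" "\<forall>u\<in>S0 \<inter> T. sat A I s u"
    using assms unfolding finitely_satisfiable_def by (meson finite_Int inf_le2)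
  then show "\<exists>s. is_point A X s \<and> (\<forall>u\<in>S0. sat A I s u)"
    using S0(1) by (auto simp: ThX_def)
qed

lemma finitely_satisfiable_insert_consequence:
  assumes "finitely_satisfiable A I X M" "finite F" "F \<subseteq> M"
    and "\<And>s. is_point A X s \<Longrightarrow> \<forall>u\<in>F. sat A I s u \<Longrightarrow> sat A I s v"
  shows "finitely_satisfiable A I X (insert v M)"
  unfolding finitely_satisfiable_def
proof (intro allI impI)
  fix S0 assume S0: "S0 \<subseteq> insert v M" "finite S0"
  then have "S0 - {v} \<union> F \<subseteq> M" "finite (S0 - {v} \<union> F)" using assms(2,3) by auto
  then obtain s where "is_point A X s" "\<forall>u\<in>S0 - {v} \<union> F. sat A I s u"
    using assms(1) unfolding finitely_satisfiable_def by blast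
  then show "\<exists>s. is_point A X s \<and> (\<forall>u\<in>S0. sat A I s u)" using assms(4) by blast
qed

lemma finitely_satisfiable_insert_or_Neg:
  assumes "finitely_satisfiable A I X M"
  shows "finitely_satisfiable A I X (insert u M) \<or> finitely_satisfiable A I X (insert (Neg u) M)"
proof (rule ccontr)
  assume "\<not> ?thesis"
  then obtain S1 S2 where S1: "S1 \<subseteq> insert u M" "finite S1"
      "\<forall>s. is_point A X s \<longrightarrow> \<not> (\<forall>w\<in>S1. sat A I s w)"
    and S2: "S2 \<subseteq> insert (Neg u) M" "finite S2"
      "\<forall>s. is_point A X s \<longrightarrow> \<not> (\<forall>w\<in>S2. sat A I s w)"
    unfolding finitely_satisfiable_def by blast
  have "S1 - {u} \<union> (S2 - {Neg u}) \<subseteq> M" "finite (S1 - {u} \<union> (S2 - {Neg u}))"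
    using S1 S2 by auto
  then obtain s where s: "is_point A X s" "\<forall>w\<in>S1 - {u} \<union> (S2 - {Neg u}). sat A I s w"
    using assms unfolding finitely_satisfiable_def by blast
  show False
  proof (cases "sat A I s u")
    case True
    then have "\<forall>w\<in>S1. sat A I s w" using s(2) by blast
    then show False using S1(3) s(1) by blast
  next
    case False
    then have "\<forall>w\<in>S2. sat A I s w" using s(2) by auto
    then show False using S2(3) s(1) by blast
  qed
qed

lemma finitely_satisfiable_not_both:
  assumes "finitely_satisfiable A I X M" "u \<in> M"
  shows "Neg u \<notin> M"
proof
  assume "Neg u \<in> M"
  then have "{u, Neg u} \<subseteq> M" using assms(2) by blast
  then show False
    using assms(1) unfolding finitely_satisfiable_def by (metis finite.emptyI finite_insert insertCI sat.simps(2))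
qed

lemma finitely_satisfiable_Union_chain:
  assumes "\<C> \<noteq> {}" "subset.chain \<C>' \<C>" "\<forall>S\<in>\<C>. finitely_satisfiable A I X S"
  shows "finitely_satisfiable A I X (\<Union>\<C>)"
  unfolding finitely_satisfiable_def
proof (intro allI impI)
  fix S0 assume "S0 \<subseteq> \<Union>\<C>" "finite S0"
  moreover have "subset.chain UNIV \<C>" using assms(2) by (auto simp: subset_chain_def)
  ultimately obtain S where "S \<in> \<C>" "S0 \<subseteq> S"
    using finite_subset_Union_chain assms(1) by blast
  then show "\<exists>s. is_point A X s \<and> (\<forall>u\<in>S0. sat A I s u)"
    using \<open>finite S0\<close> assms(3) unfolding finitely_satisfiable_def by blast
qed

lemma exists_maximal_finitely_satisfiable:
  assumes "finitely_satisfiable A I X B" "B \<subseteq> PhiX ar X"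
  obtains M where "B \<subseteq> M" "M \<subseteq> PhiX ar X" "finitely_satisfiable A I X M"
    "\<And>v. v \<in> PhiX ar X \<Longrightarrow> finitely_satisfiable A I X (insert v M) \<Longrightarrow> v \<in> M"
proof -
  define \<A> where "\<A> = {S. B \<subseteq> S \<and> S \<subseteq> PhiX ar X \<and> finitely_satisfiable A I X S}"
  have "\<exists>M\<in>\<A>. \<forall>S\<in>\<A>. M \<subseteq> S \<longrightarrow> S = M"
  proof (rule subset_Zorn_nonempty)
    show "\<A> \<noteq> {}" using assms by (auto simp: \<A>_def)
    fix \<C> assume \<C>: "\<C> \<noteq> {}" "subset.chain \<A> \<C>"
    then have "\<C> \<subseteq> \<A>" by (simp add: subset_chain_def)
    then show "\<Union>\<C> \<in> \<A>"
      using \<C> finitely_satisfiable_Union_chain[OF \<C>] by (fastforce simp: \<A>_def)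
  qed
  then obtain M where "M \<in> \<A>" "\<And>S. S \<in> \<A> \<Longrightarrow> M \<subseteq> S \<Longrightarrow> S = M" by blast
  then show thesis
    by (intro that[of M]) (auto simp: \<A>_def, blast)
qed

lemma maximal_finitely_satisfiable_ultrafilter:
  fixes A :: "'a set"
  assumes H: "in_variety ar E A I"
    and M: "M \<subseteq> PhiX ar X" "finitely_satisfiable A I X M"
    and maximal: "\<And>v. v \<in> PhiX ar X \<Longrightarrow> finitely_satisfiable A I X (insert v M) \<Longrightarrow> v \<in> M"
  shows "ultrafilter_Phi ar E TYPE('a) X M"
  unfolding ultrafilter_Phi_def
proof (intro conjI ballI impI)
  show "M \<subseteq> PhiX ar X" by (rule M(1))
next
  let ?true = "Ex 0 (Eq (Var 0) (Var 0)) :: 'f fm"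
  have "?true \<in> PhiX ar X" "Neg ?true \<in> PhiX ar X" by (simp_all add: PhiX_def)
  then show "M \<noteq> PhiX ar X" using finitely_satisfiable_not_both[OF M(2)] by blast
next
  fix u v assume "u \<in> M" "v \<in> PhiX ar X" "phi_le ar E TYPE('a) X u v"
  moreover have "sat A I s v" if "is_point A X s" "sat A I s u" for s
    using \<open>phi_le ar E TYPE('a) X u v\<close> H that unfolding phi_le_def by blast
  ultimately show "v \<in> M"
    by (intro maximal finitely_satisfiable_insert_consequence[OF M(2), of "{u}"]) auto
next
  fix u v assume "u \<in> M" "v \<in> M"
  moreover from this have "Conj u v \<in> PhiX ar X" using M(1) by (auto simp: PhiX_def)
  ultimately show "Conj u v \<in> M"
    by (intro maximal finitely_satisfiable_insert_consequence[OF M(2), of "{u, v}"]) auto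
next
  fix u assume "u \<in> PhiX ar X"
  moreover have "Neg u \<in> PhiX ar X" using \<open>u \<in> PhiX ar X\<close> by (simp add: PhiX_def)
  ultimately show "u \<in> M \<or> Neg u \<in> M"
    using finitely_satisfiable_insert_or_Neg[OF M(2), of u] maximal by blast
qed

theorem theorem3p3:
  fixes ar :: "'f \<Rightarrow> nat" and E :: "('f trm \<times> 'f trm) set"
    and A :: "'a set" and I :: "'f \<Rightarrow> 'a list \<Rightarrow> 'a"
  assumes "variety ar E"
    and "in_variety ar E A I"
    and "LG_saturated ar E A I"
  shows "MT_saturated ar A I"
  unfolding MT_saturated_def
proof (intro allI impI)
  fix X :: "nat set" and T
  assume "finite X" and "MT_type ar A I X T"
  then have special: "\<forall>u\<in>T. X_special ar X u" and "finitely_satisfiable A I X T"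
    by (simp_all add: MT_type_iff)
  then have "finitely_satisfiable A I X (T \<union> ThX ar A I X)"
    by (simp add: finitely_satisfiable_Un_ThX)
  moreover have "T \<union> ThX ar A I X \<subseteq> PhiX ar X"
    using special by (auto simp: X_special_def PhiX_def ThX_def)
  ultimately obtain M where TM: "T \<union> ThX ar A I X \<subseteq> M" and
    "ultrafilter_Phi ar E TYPE('a) X M"
    using exists_maximal_finitely_satisfiable maximal_finitely_satisfiable_ultrafilter[OF assms(2)]
    by metis
  then obtain s where s: "is_point A X s" "M = LKer ar A I X s"
    using assms(3) \<open>finite X\<close> unfolding LG_saturated_def by blast
  then have "T \<subseteq> Tp ar A I X s"
    using TM special by (auto simp: LKer_def Tp_def)
  with s(1) show "\<exists>s. is_point A X s \<and> T \<subseteq> Tp ar A I X s" by blast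
qed

end
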